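(* Let $g$ be a blurred permutation on $[n]$ with associated partition $P_1,\dots,P_m$, and let $f$ be a multipermutation on $[n]$ that does not respect $g$. Then either $(f\circ g)\circ(g^{-1}\circ f^{-1})$ or $(f^{-1}\circ g^{-1})\circ(g\circ f)$ is a reflexive and symmetric multipermutation that is not a sub-multipermutation of $g$.
   Context: A multipermutation on $[n]$ is a map $f:[n]\to\mathcal{P}([n])\setminus\{\emptyset\}$ with every $y$ in some $f(x)$; $f^{-1}:x\mapsto\{y:x\in f(y)\}$; $(g\circ f)(x)=\{z:\exists y\,(y\in f(x)\wedge z\in g(y))\}$; $f$ is a sub-multipermutation of $h$ if $f(x)\subseteq h(x)$ for all $x$; symmetric means $a\in f(b)\iff b\in f(a)$, reflexive means $a\in f(a)$ for all $a$. A blurred permutation $g$ with associated partition $P_1,\dots,P_m$ is one for which there is a permutation $\sigma$ of $[m]$ ($m\le n$) with $i\in P_i$ for $i\in[m]$ and $g(x)=P_{\sigma(i)}$ for all $x\in P_i$. A multipermutation $f$ respects $g$ if neither (i) there exist $a,b$ in the same block $P_i$ and $c,d$ in distinct blocks with $c\in f(a)$, $d\in f(b)$, nor (ii) there exist $a,b$ in distinct blocks and $c,d$ in the same block with $c\in f(a)$, $d\in f(b)$. *)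

theory Defs
  imports "HOL-Combinatorics.Permutations"
begin

text \<open>A multipermutation on [n] = {1..n} is represented as a function nat => nat set;
  only its values on {1..n} matter.\<close>

definition multiperm :: "nat \<Rightarrow> (nat \<Rightarrow> nat set) \<Rightarrow> bool" where
  "multiperm n f \<longleftrightarrow>
     (\<forall>x\<in>{1..n}. f x \<noteq> {} \<and> f x \<subseteq> {1..n}) \<and>
     (\<forall>y\<in>{1..n}. \<exists>x\<in>{1..n}. y \<in> f x)"

definition minv :: "nat \<Rightarrow> (nat \<Rightarrow> nat set) \<Rightarrow> (nat \<Rightarrow> nat set)" where
  "minv n f = (\<lambda>x. {y\<in>{1..n}. x \<in> f y})"

definition mcomp :: "(nat \<Rightarrow> nat set) \<Rightarrow> (nat \<Rightarrow> nat set) \<Rightarrow> (nat \<Rightarrow> nat set)" where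
  "mcomp g f = (\<lambda>x. {z. \<exists>y. y \<in> f x \<and> z \<in> g y})"

definition submultiperm :: "nat \<Rightarrow> (nat \<Rightarrow> nat set) \<Rightarrow> (nat \<Rightarrow> nat set) \<Rightarrow> bool" where
  "submultiperm n f h \<longleftrightarrow> (\<forall>x\<in>{1..n}. f x \<subseteq> h x)"

definition msymmetric :: "nat \<Rightarrow> (nat \<Rightarrow> nat set) \<Rightarrow> bool" where
  "msymmetric n f \<longleftrightarrow> (\<forall>a\<in>{1..n}. \<forall>b\<in>{1..n}. a \<in> f b \<longleftrightarrow> b \<in> f a)"

definition mreflexive :: "nat \<Rightarrow> (nat \<Rightarrow> nat set) \<Rightarrow> bool" where
  "mreflexive n f \<longleftrightarrow> (\<forall>a\<in>{1..n}. a \<in> f a)"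

definition is_partition :: "nat \<Rightarrow> nat \<Rightarrow> (nat \<Rightarrow> nat set) \<Rightarrow> bool" where
  "is_partition n m P \<longleftrightarrow>
     (\<forall>i\<in>{1..m}. P i \<noteq> {}) \<and>
     (\<forall>i\<in>{1..m}. \<forall>j\<in>{1..m}. i \<noteq> j \<longrightarrow> P i \<inter> P j = {}) \<and>
     (\<Union>i\<in>{1..m}. P i) = {1..n}"

definition blurred :: "nat \<Rightarrow> (nat \<Rightarrow> nat set) \<Rightarrow> nat \<Rightarrow> (nat \<Rightarrow> nat set) \<Rightarrow> bool" where
  "blurred n g m P \<longleftrightarrow>
     multiperm n g \<and> m \<le> n \<and> is_partition n m P \<and>
     (\<forall>i\<in>{1..m}. i \<in> P i) \<and>
     (\<exists>\<sigma>. \<sigma> permutes {1..m} \<and> (\<forall>i\<in>{1..m}. \<forall>x\<in>P i. g x = P (\<sigma> i)))"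

definition same_block :: "nat \<Rightarrow> (nat \<Rightarrow> nat set) \<Rightarrow> nat \<Rightarrow> nat \<Rightarrow> bool" where
  "same_block m P a b \<longleftrightarrow> (\<exists>i\<in>{1..m}. a \<in> P i \<and> b \<in> P i)"

definition mrespects :: "nat \<Rightarrow> (nat \<Rightarrow> nat set) \<Rightarrow> nat \<Rightarrow> (nat \<Rightarrow> nat set) \<Rightarrow> bool" where
  "mrespects n f m P \<longleftrightarrow>
     \<not> (\<exists>a\<in>{1..n}. \<exists>b\<in>{1..n}. \<exists>c\<in>{1..n}. \<exists>d\<in>{1..n}.
          same_block m P a b \<and> \<not> same_block m P c d \<and> c \<in> f a \<and> d \<in> f b) \<and>
     \<not> (\<exists>a\<in>{1..n}. \<exists>b\<in>{1..n}. \<exists>c\<in>{1..n}. \<exists>d\<in>{1..n}.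
          \<not> same_block m P a b \<and> same_block m P c d \<and> c \<in> f a \<and> d \<in> f b)"

end

theory Submission
  imports Defs
begin

text \<open>Both candidates have the form \<open>k \<circ> k\<inverse>\<close> or \<open>k\<inverse> \<circ> k\<close> (for \<open>k = f \<circ> g\<close>, resp.
  \<open>k = g \<circ> f\<close>), and such products are always reflexive and symmetric: \<open>y \<in> (k \<circ> k\<inverse>)(x)\<close>
  iff \<open>x\<close> and \<open>y\<close> lie in a common image \<open>k z\<close>, and \<open>y \<in> (k\<inverse> \<circ> k)(x)\<close> iff \<open>k x\<close> and
  \<open>k y\<close> meet. A reflexive sub-multipermutation of a blurred permutation \<open>g\<close> forces \<open>g\<close> to be
  reflexive, i.e. to fix every block, so it only relates points of the same block.
  A violation of type (i) puts two points \<open>c, d\<close> of different blocks into a common image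
  \<open>(f \<circ> g)(e)\<close>, because \<open>g e\<close> is a whole block; a violation of type (ii) makes
  \<open>(g \<circ> f)(a)\<close> and \<open>(g \<circ> f)(b)\<close> meet for \<open>a, b\<close> in different blocks, because \<open>g\<close> is
  constant on blocks.\<close>

lemma multiperm_nonempty:
  "multiperm n f \<Longrightarrow> x \<in> {1..n} \<Longrightarrow> \<exists>y. y \<in> f x"
  unfolding multiperm_def by blast

lemma multiperm_subset:
  "multiperm n f \<Longrightarrow> x \<in> {1..n} \<Longrightarrow> f x \<subseteq> {1..n}"
  unfolding multiperm_def by blast

lemma multiperm_covers:
  "multiperm n f \<Longrightarrow> y \<in> {1..n} \<Longrightarrow> \<exists>x\<in>{1..n}. y \<in> f x"
  unfolding multiperm_def by blast

lemma multiperm_mcomp: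
  assumes f: "multiperm n f" and g: "multiperm n g"
  shows "multiperm n (mcomp f g)"
proof -
  have "mcomp f g x \<noteq> {}" if "x \<in> {1..n}" for x
    using multiperm_nonempty[OF g that] multiperm_nonempty[OF f] multiperm_subset[OF g that]
    unfolding mcomp_def by blast
  moreover have "mcomp f g x \<subseteq> {1..n}" if "x \<in> {1..n}" for x
    using multiperm_subset[OF g that] multiperm_subset[OF f] unfolding mcomp_def by blast
  moreover have "\<exists>x\<in>{1..n}. z \<in> mcomp f g x" if "z \<in> {1..n}" for z
    using multiperm_covers[OF f that] multiperm_covers[OF g] unfolding mcomp_def by blast
  ultimately show ?thesis
    unfolding multiperm_def by blast
qed

lemma minv_mcomp:
  assumes "multiperm n g"
  shows "minv n (mcomp f g) = mcomp (minv n g) (minv n f)"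
  using multiperm_subset[OF assms] unfolding minv_def mcomp_def by fastforce

lemma mem_mcomp_minv:
  "y \<in> mcomp k (minv n k) x \<longleftrightarrow> (\<exists>z\<in>{1..n}. x \<in> k z \<and> y \<in> k z)"
  unfolding mcomp_def minv_def by auto

lemma mem_minv_mcomp:
  "y \<in> mcomp (minv n k) k x \<longleftrightarrow> y \<in> {1..n} \<and> k x \<inter> k y \<noteq> {}"
  unfolding mcomp_def minv_def by auto

lemma reflexive_symmetric_mcomp_minv:
  assumes "multiperm n k"
  shows "multiperm n (mcomp k (minv n k)) \<and> mreflexive n (mcomp k (minv n k))
    \<and> msymmetric n (mcomp k (minv n k))"
proof -
  have refl: "x \<in> mcomp k (minv n k) x" if "x \<in> {1..n}" for x
    using multiperm_covers[OF assms that] by (auto simp: mem_mcomp_minv)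
  have "mcomp k (minv n k) x \<subseteq> {1..n}" for x
    using multiperm_subset[OF assms] unfolding subset_iff mem_mcomp_minv by blast
  moreover have "msymmetric n (mcomp k (minv n k))"
    unfolding msymmetric_def mem_mcomp_minv by blast
  ultimately show ?thesis
    using refl unfolding multiperm_def mreflexive_def by blast
qed

lemma reflexive_symmetric_minv_mcomp:
  assumes "multiperm n k"
  shows "multiperm n (mcomp (minv n k) k) \<and> mreflexive n (mcomp (minv n k) k)
    \<and> msymmetric n (mcomp (minv n k) k)"
proof -
  have refl: "x \<in> mcomp (minv n k) k x" if "x \<in> {1..n}" for x
    using multiperm_nonempty[OF assms that] that by (auto simp: mem_minv_mcomp)
  have "mcomp (minv n k) k x \<subseteq> {1..n}" for x
    unfolding mem_minv_mcomp subset_iff by blast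
  moreover have "msymmetric n (mcomp (minv n k) k)"
    unfolding msymmetric_def mem_minv_mcomp by blast
  ultimately show ?thesis
    using refl unfolding multiperm_def mreflexive_def by blast
qed

lemma blurred_multiperm:
  "blurred n g m P \<Longrightarrow> multiperm n g"
  unfolding blurred_def by (elim conjE)

lemma blurred_partition:
  "blurred n g m P \<Longrightarrow> is_partition n m P"
  unfolding blurred_def by (elim conjE)

lemma blurred_image_is_block:
  assumes "blurred n g m P" and "i \<in> {1..m}" and "x \<in> P i"
  obtains j where "j \<in> {1..m}" and "g x = P j"
proof -
  obtain \<sigma> where \<sigma>: "\<sigma> permutes {1..m}" and "\<forall>i\<in>{1..m}. \<forall>x\<in>P i. g x = P (\<sigma> i)"
    using assms(1) unfolding blurred_def by (elim conjE exE) blast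
  then have "\<sigma> i \<in> {1..m}" and "g x = P (\<sigma> i)"
    using assms(2,3) permutes_in_image[OF \<sigma>] by simp_all
  then show ?thesis
    by (rule that)
qed

lemma blurred_block_exists:
  assumes "blurred n g m P" and "x \<in> {1..n}"
  shows "\<exists>i\<in>{1..m}. x \<in> P i"
  using blurred_partition[OF assms(1)] assms(2) unfolding is_partition_def by blast

lemma blurred_block_unique:
  assumes "blurred n g m P" and "i \<in> {1..m}" "j \<in> {1..m}" "x \<in> P i" "x \<in> P j"
  shows "i = j"
  using blurred_partition[OF assms(1)] assms(2-) unfolding is_partition_def by blast

lemma blurred_image_eq:
  assumes "blurred n g m P" and "same_block m P a b"
  shows "g a = g b"
proof -
  obtain \<sigma> where "\<forall>i\<in>{1..m}. \<forall>x\<in>P i. g x = P (\<sigma> i)"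
    using assms(1) unfolding blurred_def by (elim conjE exE) blast
  moreover obtain i where "i \<in> {1..m}" "a \<in> P i" "b \<in> P i"
    using assms(2) unfolding same_block_def by blast
  ultimately show ?thesis by simp
qed

lemma blurred_image_contains_block:
  assumes "blurred n g m P" and "e \<in> {1..n}" and "a \<in> g e" and "same_block m P a b"
  shows "b \<in> g e"
proof -
  obtain i where "i \<in> {1..m}" "e \<in> P i"
    using blurred_block_exists[OF assms(1,2)] by blast
  then obtain j where j: "j \<in> {1..m}" "g e = P j"
    using blurred_image_is_block[OF assms(1)] by blast
  obtain k where k: "k \<in> {1..m}" "a \<in> P k" "b \<in> P k"
    using assms(4) unfolding same_block_def by blast
  have "j = k"
    using blurred_block_unique[OF assms(1) j(1) k(1)] j(2) k(2) assms(3) by blast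
  with j k show ?thesis by simp
qed

lemma blurred_reflexive_image_same_block:
  assumes "blurred n g m P" and "mreflexive n g" and "x \<in> {1..n}" and "y \<in> g x"
  shows "same_block m P x y"
proof -
  obtain i where i: "i \<in> {1..m}" "x \<in> P i"
    using blurred_block_exists[OF assms(1,3)] by blast
  then obtain j where j: "j \<in> {1..m}" "g x = P j"
    using blurred_image_is_block[OF assms(1)] by blast
  have "x \<in> P j"
    using assms(2,3) j(2) unfolding mreflexive_def by blast
  then have "j = i"
    using blurred_block_unique[OF assms(1) j(1) i(1)] i(2) by blast
  with i j assms(4) show ?thesis
    unfolding same_block_def by auto
qed

lemma not_submultiperm_blurred:
  assumes "blurred n g m P" and "mreflexive n h"
    and "x \<in> {1..n}" and "y \<in> h x" and "\<not> same_block m P x y"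
  shows "\<not> submultiperm n h g"
proof
  assume sub: "submultiperm n h g"
  then have "mreflexive n g"
    using assms(2) unfolding mreflexive_def submultiperm_def by blast
  moreover have "y \<in> g x"
    using sub assms(3,4) unfolding submultiperm_def by blast
  ultimately show False
    using blurred_reflexive_image_same_block[OF assms(1) _ assms(3)] assms(5) by blast
qed

lemma violation_i_not_submultiperm:
  assumes "blurred n g m P" and "multiperm n f"
    and "a \<in> {1..n}" "c \<in> {1..n}"
    and "same_block m P a b" "\<not> same_block m P c d" "c \<in> f a" "d \<in> f b"
  shows "\<not> submultiperm n (mcomp (mcomp f g) (minv n (mcomp f g))) g"
proof -
  obtain e where e: "e \<in> {1..n}" "a \<in> g e"
    using multiperm_covers[OF blurred_multiperm[OF assms(1)] assms(3)] by blast
  have "b \<in> g e"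
    using blurred_image_contains_block[OF assms(1) e assms(5)] .
  with e assms(7,8) have "d \<in> mcomp (mcomp f g) (minv n (mcomp f g)) c"
    unfolding mem_mcomp_minv by (auto simp: mcomp_def)
  then show ?thesis
    using not_submultiperm_blurred[OF assms(1) _ assms(4) _ assms(6)]
      reflexive_symmetric_mcomp_minv[OF multiperm_mcomp[OF assms(2) blurred_multiperm[OF assms(1)]]]
    by blast
qed

lemma violation_ii_not_submultiperm:
  assumes "blurred n g m P" and "multiperm n f"
    and "a \<in> {1..n}" "b \<in> {1..n}" "c \<in> {1..n}"
    and "\<not> same_block m P a b" "same_block m P c d" "c \<in> f a" "d \<in> f b"
  shows "\<not> submultiperm n (mcomp (minv n (mcomp g f)) (mcomp g f)) g"
proof -
  obtain e where "e \<in> g c"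
    using multiperm_nonempty[OF blurred_multiperm[OF assms(1)] assms(5)] by blast
  moreover have "g c = g d"
    using blurred_image_eq[OF assms(1,7)] .
  ultimately have "b \<in> mcomp (minv n (mcomp g f)) (mcomp g f) a"
    using assms(4,8,9) unfolding mem_minv_mcomp by (auto simp: mcomp_def)
  then show ?thesis
    using not_submultiperm_blurred[OF assms(1) _ assms(3) _ assms(6)]
      reflexive_symmetric_minv_mcomp[OF multiperm_mcomp[OF blurred_multiperm[OF assms(1)] assms(2)]]
    by blast
qed

theorem lemma3p5:
  fixes n m :: nat and f g P :: "nat \<Rightarrow> nat set"
  assumes "blurred n g m P"
    and "multiperm n f"
    and "\<not> mrespects n f m P"
  shows "(let h = mcomp (mcomp f g) (mcomp (minv n g) (minv n f)) in
            multiperm n h \<and> mreflexive n h \<and> msymmetric n h \<and> \<not> submultiperm n h g)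
       \<or> (let h = mcomp (mcomp (minv n f) (minv n g)) (mcomp g f) in
            multiperm n h \<and> mreflexive n h \<and> msymmetric n h \<and> \<not> submultiperm n h g)"
proof -
  have g: "multiperm n g"
    using assms(1) by (rule blurred_multiperm)
  have fg: "multiperm n (mcomp f g)" and gf: "multiperm n (mcomp g f)"
    using assms(2) g by (auto intro: multiperm_mcomp)
  have inverses: "mcomp (minv n g) (minv n f) = minv n (mcomp f g)"
    "mcomp (minv n f) (minv n g) = minv n (mcomp g f)"
    using minv_mcomp[OF g] minv_mcomp[OF assms(2)] by simp_all
  from assms(3) consider
      (i) a b c d where "a \<in> {1..n}" "c \<in> {1..n}" "same_block m P a b"
        "\<not> same_block m P c d" "c \<in> f a" "d \<in> f b"
    | (ii) a b c d where "a \<in> {1..n}" "b \<in> {1..n}" "c \<in> {1..n}" "\<not> same_block m P a b"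
        "same_block m P c d" "c \<in> f a" "d \<in> f b"
    unfolding mrespects_def by blast
  then show ?thesis
  proof cases
    case i
    then show ?thesis
      using violation_i_not_submultiperm[OF assms(1,2)] reflexive_symmetric_mcomp_minv[OF fg]
      unfolding inverses Let_def by blast
  next
    case ii
    then show ?thesis
      using violation_ii_not_submultiperm[OF assms(1,2)] reflexive_symmetric_minv_mcomp[OF gf]
      unfolding inverses Let_def by blast
  qed
qed

end
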